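(* Let $V:\mathbb{R}^n\to\mathbb{R}$ be measurable with $\sup V - \inf V \le c$ for some $c\ge 0$, and let $f = e^{-V}$ satisfy $\int f\,d\gamma = 1$. Then for every $t>0$, $f_t$ is $-\dfrac{e^{c}}{e^{2t}-1}$-log-concave.
   Context: $\gamma$ is the standard Gaussian measure on $\mathbb{R}^n$. For $t \ge 0$ and $f \in L^1(\gamma)$, the Ornstein–Uhlenbeck semigroup is $(P_t f)(x) = \mathbb{E}\, f(e^{-t}x + \sqrt{1-e^{-2t}}\,Z)$, where $Z$ is a standard Gaussian random vector in $\mathbb{R}^n$; write $f_t = P_t f$. For $\lambda\in\mathbb{R}$, a function $g:\mathbb{R}^n\to(0,\infty)$ is called $-\lambda$-log-concave if $x\mapsto \log g(x) - \lambda|x|^2/2$ is concave. *)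

theory Defs
  imports "HOL-Analysis.Analysis"
begin

definition gauss_density :: "'a::euclidean_space \<Rightarrow> real" where
  "gauss_density x = (2 * pi) powr (- real DIM('a) / 2) * exp (- (norm x)\<^sup>2 / 2)"

definition std_gaussian :: "'a::euclidean_space measure" where
  "std_gaussian = density lebesgue (\<lambda>x. ennreal (gauss_density x))"

definition OU :: "real \<Rightarrow> ('a::euclidean_space \<Rightarrow> real) \<Rightarrow> 'a \<Rightarrow> real" where
  "OU t f x = (\<integral>z. f (exp (- t) *\<^sub>R x + sqrt (1 - exp (- 2 * t)) *\<^sub>R z) \<partial>std_gaussian)"

text \<open>g is (-lam)-log-concave: g > 0 and x \<mapsto> log g x - lam |x|^2/2 is concave.\<close>
definition neg_log_concave :: "real \<Rightarrow> ('a::euclidean_space \<Rightarrow> real) \<Rightarrow> bool" where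
  "neg_log_concave lam g \<longleftrightarrow>
     (\<forall>x. 0 < g x) \<and> concave_on UNIV (\<lambda>x. ln (g x) - lam * (norm x)\<^sup>2 / 2)"

end

theory Submission
  imports Defs
begin

text \<open>
  Write \<open>f_t x = \<integral> g d\<gamma>\<close> with \<open>g z = f (exp (-t) x + sqrt (1 - exp (-2t)) z)\<close>.
  The Cameron--Martin formula turns a shift of \<open>x\<close> by \<open>\<plusminus>h\<close> into the reweighting
  \<open>exp (\<plusminus>w \<bullet> z - |w|^2/2)\<close> of \<open>\<gamma>\<close>, where \<open>|w|^2 = |h|^2 / (exp (2t) - 1)\<close>.
  Since \<open>V\<close> oscillates by at most \<open>c\<close>, \<open>g\<close> is bounded by \<open>exp c\<close> times its mean, and
  integrating \<open>(g - sup g) (cosh (w \<bullet> z) - 1) \<le> 0\<close> gives the midpoint inequality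
  \<open>f_t (x + h) f_t (x - h) \<le> f_t x ^ 2 exp (exp c |h|^2 / (exp (2t) - 1))\<close>.
  Midpoint concavity of \<open>log f_t - \<lambda> |x|^2 / 2\<close> plus a quadratic lower bound
  (which rules out pathological midpoint-concave functions) gives concavity.
\<close>

lemma midpoint_convex_dyadic_le:
  fixes H :: "real \<Rightarrow> real"
  assumes mid: "\<And>u d. 2 * H u \<le> H (u + d) + H (u - d)"
  shows "H (u0 + d / 2^k) - H u0 \<le> (H (u0 + d) - H u0) / 2^k"
proof (induction k)
  case 0
  then show ?case by simp
next
  case (Suc k)
  define q where "q = d / 2^k"
  have "2 * H (u0 + q/2) \<le> H (u0 + q/2 + q/2) + H (u0 + q/2 - q/2)"
    by (rule mid)
  moreover have "u0 + q/2 + q/2 = u0 + q" "u0 + q/2 - q/2 = u0"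
    by simp_all
  ultimately have "H (u0 + q/2) - H u0 \<le> (H (u0 + q) - H u0) / 2"
    by simp
  also have "\<dots> \<le> ((H (u0 + d) - H u0) / 2^k) / 2"
    using Suc.IH unfolding q_def by (intro divide_right_mono) auto
  finally show ?case
    by (simp add: q_def mult.commute)
qed

lemma midpoint_convex_oscillation_le:
  fixes H :: "real \<Rightarrow> real"
  assumes mid: "\<And>u d. 2 * H u \<le> H (u + d) + H (u - d)"
    and bound: "\<And>d. \<bar>d\<bar> \<le> 1 \<Longrightarrow> H (u0 + d) - H u0 \<le> K"
    and v: "\<bar>v\<bar> \<le> 1 / 2^k"
  shows "\<bar>H (u0 + v) - H u0\<bar> \<le> K / 2^k"
proof -
  have upper: "H (u0 + w) - H u0 \<le> K / 2^k" if "\<bar>w\<bar> \<le> 1 / 2^k" for w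
  proof -
    define d where "d = w * 2^k"
    have "\<bar>d\<bar> \<le> 1"
      using that by (simp add: d_def abs_mult field_simps)
    have "H (u0 + w) - H u0 = H (u0 + d / 2^k) - H u0"
      by (simp add: d_def)
    also have "\<dots> \<le> (H (u0 + d) - H u0) / 2^k"
      by (rule midpoint_convex_dyadic_le[OF mid])
    also have "\<dots> \<le> K / 2^k"
      using bound[OF \<open>\<bar>d\<bar> \<le> 1\<close>] by (simp add: divide_right_mono)
    finally show ?thesis .
  qed
  have "2 * H u0 \<le> H (u0 + v) + H (u0 - v)"
    by (rule mid)
  then show ?thesis
    using upper[of v] upper[of "- v"] v by simp
qed

lemma midpoint_convex_isCont:
  fixes H :: "real \<Rightarrow> real"
  assumes mid: "\<And>u d. 2 * H u \<le> H (u + d) + H (u - d)"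
    and quadratic: "\<And>u. H u \<le> B + C * u^2"
  shows "isCont H u0"
proof -
  define K where "K = B + \<bar>C\<bar> * (\<bar>u0\<bar> + 1)^2 - H u0"
  have bound: "H (u0 + d) - H u0 \<le> K" if "\<bar>d\<bar> \<le> 1" for d
  proof -
    have "\<bar>u0 + d\<bar> \<le> \<bar>u0\<bar> + 1"
      using that abs_triangle_ineq[of u0 d] by linarith
    then have "(u0 + d)^2 \<le> (\<bar>u0\<bar> + 1)^2"
      using power_mono[of _ _ 2] by fastforce
    then have "C * (u0 + d)^2 \<le> \<bar>C\<bar> * (\<bar>u0\<bar> + 1)^2"
      by (meson abs_ge_self abs_ge_zero mult_left_mono mult_right_mono order_trans zero_le_power2)
    then show ?thesis
      using quadratic[of "u0 + d"] unfolding K_def by linarith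
  qed
  show ?thesis
    unfolding isCont_def LIM_eq
  proof (intro allI impI)
    fix r :: real
    assume "0 < r"
    obtain k :: nat where "K / r < 2^k"
      using real_arch_pow[of 2 "K / r"] by auto
    with \<open>0 < r\<close> have "K / 2^k < r"
      by (simp add: field_simps)
    moreover have "\<bar>H x - H u0\<bar> \<le> K / 2^k" if "\<bar>x - u0\<bar> < 1 / 2^k" for x
      using midpoint_convex_oscillation_le[OF mid bound, of "x - u0" k] that by simp
    ultimately show "\<exists>s>0. \<forall>x. x \<noteq> u0 \<and> norm (x - u0) < s \<longrightarrow> norm (H x - H u0) < r"
      by (intro exI[of _ "1 / 2^k"]) force
  qed
qed

lemma midpoint_convex_nonpos_on_unit_interval:
  fixes \<phi> :: "real \<Rightarrow> real"
  assumes mid: "\<And>u d. 2 * \<phi> u \<le> \<phi> (u + d) + \<phi> (u - d)"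
    and cont: "continuous_on {0..1} \<phi>"
    and ends: "\<phi> 0 \<le> 0" "\<phi> 1 \<le> 0"
    and u: "0 \<le> u" "u \<le> 1"
  shows "\<phi> u \<le> 0"
proof (rule ccontr)
  assume "\<not> \<phi> u \<le> 0"
  obtain p0 where p0: "p0 \<in> {0..1}" and max: "\<And>y. y \<in> {0..1} \<Longrightarrow> \<phi> y \<le> \<phi> p0"
    using continuous_attains_sup[OF compact_Icc _ cont] by auto
  define M where "M = \<phi> p0"
  have "0 < M"
    using max[of u] u \<open>\<not> \<phi> u \<le> 0\<close> unfolding M_def by auto
  text \<open>The leftmost maximiser cannot satisfy the midpoint inequality.\<close>
  define S where "S = {0..1} \<inter> \<phi> -` {M}"
  have "S \<noteq> {}" and "closed S" and "bdd_below S"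
    using p0 continuous_closed_preimage[OF cont closed_atLeastAtMost, of "{M}"]
    unfolding S_def M_def by auto
  define p where "p = Inf S"
  have "p \<in> S"
    unfolding p_def by (rule closed_contains_Inf) fact+
  then have "\<phi> p = M" and "0 < p" and "p < 1"
    using \<open>0 < M\<close> ends unfolding S_def by (auto simp: order.order_iff_strict)
  define d where "d = min p (1 - p)"
  have d: "0 < d" "0 \<le> p - d" "p + d \<le> 1"
    using \<open>0 < p\<close> \<open>p < 1\<close> unfolding d_def by auto
  have "\<phi> (p + d) \<le> M"
    using max[of "p + d"] d unfolding M_def by auto
  moreover have "p - d \<notin> S"
    using cInf_lower[OF _ \<open>bdd_below S\<close>, of "p - d"] d unfolding p_def by auto
  then have "\<phi> (p - d) < M"
    using max[of "p - d"] d unfolding S_def M_def by (auto simp: order.order_iff_strict)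
  ultimately show False
    using mid[of p d] \<open>\<phi> p = M\<close> by simp
qed

lemma midpoint_convex_le_chord:
  fixes H :: "real \<Rightarrow> real"
  assumes mid: "\<And>u d. 2 * H u \<le> H (u + d) + H (u - d)"
    and cont: "\<And>u. isCont H u"
    and "0 \<le> \<theta>" "\<theta> \<le> 1"
  shows "H \<theta> \<le> (1 - \<theta>) * H 0 + \<theta> * H 1"
proof -
  define \<phi> where "\<phi> u = H u - ((1 - u) * H 0 + u * H 1)" for u
  have "2 * \<phi> u \<le> \<phi> (u + d) + \<phi> (u - d)" for u d
    using mid[of u d] unfolding \<phi>_def by (simp add: algebra_simps)
  moreover have "continuous_on {0..1} \<phi>"
    unfolding \<phi>_def by (intro continuous_intros continuous_at_imp_continuous_on ballI cont)
  ultimately have "\<phi> \<theta> \<le> 0"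
    by (rule midpoint_convex_nonpos_on_unit_interval) (use assms in \<open>auto simp: \<phi>_def\<close>)
  then show ?thesis
    unfolding \<phi>_def by simp
qed

lemma midpoint_concave_imp_concave_on:
  fixes G :: "'a::real_normed_vector \<Rightarrow> real"
  assumes mid: "\<And>x h. G (x + h) + G (x - h) \<le> 2 * G x"
    and quadratic: "\<And>x. B - C * (norm x)\<^sup>2 \<le> G x"
    and "0 \<le> C"
  shows "concave_on UNIV G"
  unfolding concave_on_def
proof (rule convex_onI)
  fix t :: real and x y :: 'a
  assume t: "0 < t" "t < 1"
  define H where "H u = - G (x + u *\<^sub>R (y - x))" for u
  have H_mid: "2 * H u \<le> H (u + d) + H (u - d)" for u d
    using mid[of "x + u *\<^sub>R (y - x)" "d *\<^sub>R (y - x)"]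
    unfolding H_def by (simp add: algebra_simps)
  have "H u \<le> (- B + 2 * C * (norm x)\<^sup>2) + (2 * C * (norm (y - x))\<^sup>2) * u^2" for u
  proof -
    have "norm (x + u *\<^sub>R (y - x)) \<le> norm x + \<bar>u\<bar> * norm (y - x)"
      using norm_triangle_ineq[of x "u *\<^sub>R (y - x)"] by simp
    then have "(norm (x + u *\<^sub>R (y - x)))\<^sup>2 \<le> (norm x + \<bar>u\<bar> * norm (y - x))\<^sup>2"
      by (simp add: power_mono)
    also have "\<dots> \<le> 2 * (norm x)\<^sup>2 + 2 * (norm (y - x))\<^sup>2 * u^2"
      using sum_squares_bound[of "norm x" "\<bar>u\<bar> * norm (y - x)"]
      by (simp add: power2_eq_square algebra_simps)
    finally have "C * (norm (x + u *\<^sub>R (y - x)))\<^sup>2 \<le> C * (2 * (norm x)\<^sup>2 + 2 * (norm (y - x))\<^sup>2 * u^2)"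
      using \<open>0 \<le> C\<close> by (rule mult_left_mono)
    then show ?thesis
      using quadratic[of "x + u *\<^sub>R (y - x)"] unfolding H_def by (simp add: algebra_simps)
  qed
  then have "isCont H u" for u
    by (rule midpoint_convex_isCont[OF H_mid])
  then have "H t \<le> (1 - t) * H 0 + t * H 1"
    by (rule midpoint_convex_le_chord[OF H_mid]) (use t in auto)
  moreover have "x + t *\<^sub>R (y - x) = (1 - t) *\<^sub>R x + t *\<^sub>R y"
    by (simp add: algebra_simps)
  ultimately show "- G ((1 - t) *\<^sub>R x + t *\<^sub>R y) \<le> (1 - t) * - G x + t * - G y"
    unfolding H_def by simp
qed simp
lemma lebesgue_translation:
  fixes w :: "'a::euclidean_space"
  shows "distr lebesgue lebesgue ((+) w) = lebesgue"
    and "(+) w \<in> lebesgue \<rightarrow>\<^sub>M lebesgue"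
proof -
  have affine: "(\<lambda>x. w + (\<Sum>j\<in>Basis. (1 * (x \<bullet> j)) *\<^sub>R j)) = (+) w"
    by (simp add: euclidean_representation)
  have "lebesgue = density (distr lebesgue lebesgue ((+) w)) (\<lambda>_. \<Prod>j\<in>(Basis::'a set). \<bar>1::real\<bar>)"
    using lebesgue_affine_euclidean[of "\<lambda>_. 1" w] affine by simp
  then show "distr lebesgue lebesgue ((+) w) = lebesgue"
    by (simp add: density_1)
  show "(+) w \<in> lebesgue \<rightarrow>\<^sub>M lebesgue"
    using lebesgue_affine_measurable[of "\<lambda>_. 1" w] affine by simp
qed

lemma continuous_on_imp_borel_measurable_lebesgue:
  fixes f :: "'a::euclidean_space \<Rightarrow> 'b::euclidean_space"
  assumes "continuous_on UNIV f"
  shows "f \<in> borel_measurable lebesgue"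
  using borel_measurable_continuous_onI[OF assms] by (simp add: measurable_completion)

lemma gauss_density_nonneg: "0 \<le> gauss_density x"
  unfolding gauss_density_def by simp

lemma continuous_gauss_density: "continuous_on UNIV gauss_density"
  unfolding gauss_density_def by (intro continuous_intros) auto

lemma borel_measurable_gauss_density [measurable]:
  "gauss_density \<in> borel_measurable (lebesgue :: 'a::euclidean_space measure)"
  by (rule continuous_on_imp_borel_measurable_lebesgue[OF continuous_gauss_density])

lemma gauss_density_diff:
  fixes z w :: "'a::euclidean_space"
  shows "gauss_density (z - w) = gauss_density z * (exp (- (norm w)\<^sup>2 / 2) * exp (w \<bullet> z))"
proof -
  have "(norm (z - w))\<^sup>2 = (norm z)\<^sup>2 + (norm w)\<^sup>2 - 2 * (w \<bullet> z)"
    by (simp add: power2_norm_eq_inner inner_diff inner_commute)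
  then have "- (norm (z - w))\<^sup>2 / 2 = - (norm z)\<^sup>2 / 2 + (- (norm w)\<^sup>2 / 2 + w \<bullet> z)"
    by (simp add: field_simps)
  then have "exp (- (norm (z - w))\<^sup>2 / 2) = exp (- (norm z)\<^sup>2 / 2) * (exp (- (norm w)\<^sup>2 / 2) * exp (w \<bullet> z))"
    by (simp only: exp_add[symmetric])
  then show ?thesis
    unfolding gauss_density_def by simp
qed

lemma space_std_gaussian [simp]: "space std_gaussian = UNIV"
  by (simp add: std_gaussian_def)

lemma borel_measurable_std_gaussian [simp]:
  "g \<in> borel_measurable std_gaussian \<longleftrightarrow> g \<in> borel_measurable lebesgue"
  by (simp add: std_gaussian_def)

lemma std_gaussian_translate:
  fixes g :: "'a::euclidean_space \<Rightarrow> real"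
  assumes g [measurable]: "g \<in> borel_measurable lebesgue"
  shows integrable_std_gaussian_translate_iff:
      "integrable std_gaussian (\<lambda>z. g (z + w)) \<longleftrightarrow> integrable std_gaussian (\<lambda>z. g z * exp (w \<bullet> z))"
    and integral_std_gaussian_translate:
      "(\<integral>z. g (z + w) \<partial>std_gaussian) = exp (- (norm w)\<^sup>2 / 2) * (\<integral>z. g z * exp (w \<bullet> z) \<partial>std_gaussian)"
proof -
  define k where "k z = gauss_density (z - w) * g z" for z
  have [measurable]: "(\<lambda>z. g (z + w)) \<in> borel_measurable lebesgue"
    using borel_measurable_affine[OF g, of 1 w] by (simp add: add.commute)
  have [measurable]: "k \<in> borel_measurable lebesgue"
    using borel_measurable_affine[OF borel_measurable_gauss_density, of 1 "- w"] unfolding k_def by simp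
  have [measurable]: "(\<lambda>z. exp (w \<bullet> z)) \<in> borel_measurable lebesgue"
    by (intro continuous_on_imp_borel_measurable_lebesgue continuous_intros)
  have k_translate: "(\<lambda>z. k (w + z)) = (\<lambda>z. gauss_density z * g (z + w))"
    by (simp add: k_def add.commute)
  have k_reweight: "k = (\<lambda>z. gauss_density z * (exp (- (norm w)\<^sup>2 / 2) * (g z * exp (w \<bullet> z))))"
    by (auto simp: k_def gauss_density_diff fun_eq_iff)
  have "integrable std_gaussian (\<lambda>z. g (z + w)) \<longleftrightarrow> integrable lebesgue (\<lambda>z. k (w + z))"
    unfolding std_gaussian_def k_translate
    by (subst integrable_density) (auto simp: gauss_density_nonneg add.commute)
  also have "\<dots> \<longleftrightarrow> integrable lebesgue k"
    using integrable_distr_eq[OF lebesgue_translation(2)[of w], of k] lebesgue_translation(1)[of w]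
    by simp
  also have "\<dots> \<longleftrightarrow> integrable std_gaussian (\<lambda>z. exp (- (norm w)\<^sup>2 / 2) * (g z * exp (w \<bullet> z)))"
    unfolding std_gaussian_def k_reweight
    by (subst integrable_density) (auto simp: gauss_density_nonneg)
  also have "\<dots> \<longleftrightarrow> integrable std_gaussian (\<lambda>z. g z * exp (w \<bullet> z))"
    by simp
  finally show "integrable std_gaussian (\<lambda>z. g (z + w)) \<longleftrightarrow> integrable std_gaussian (\<lambda>z. g z * exp (w \<bullet> z))" .
  have "(\<integral>z. g (z + w) \<partial>std_gaussian) = (\<integral>z. k (w + z) \<partial>lebesgue)"
    unfolding std_gaussian_def k_translate
    by (subst integral_density) (auto simp: gauss_density_nonneg add.commute)
  also have "\<dots> = integral\<^sup>L lebesgue k"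
    using integral_distr[OF lebesgue_translation(2)[of w], of k] lebesgue_translation(1)[of w]
    by simp
  also have "\<dots> = (\<integral>z. exp (- (norm w)\<^sup>2 / 2) * (g z * exp (w \<bullet> z)) \<partial>std_gaussian)"
    unfolding std_gaussian_def k_reweight
    by (subst integral_density) (auto simp: gauss_density_nonneg)
  also have "\<dots> = exp (- (norm w)\<^sup>2 / 2) * (\<integral>z. g z * exp (w \<bullet> z) \<partial>std_gaussian)"
    by simp
  finally show "(\<integral>z. g (z + w) \<partial>std_gaussian) = exp (- (norm w)\<^sup>2 / 2) * (\<integral>z. g z * exp (w \<bullet> z) \<partial>std_gaussian)" .
qed

lemma std_gaussian_exp_inner:
  fixes w :: "'a::euclidean_space"
  assumes "finite_measure (std_gaussian :: 'a measure)"
  shows integrable_std_gaussian_exp_inner: "integrable std_gaussian (\<lambda>z. exp (w \<bullet> z))"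
    and integral_std_gaussian_exp_inner:
      "(\<integral>z. exp (w \<bullet> z) \<partial>std_gaussian) = measure (std_gaussian :: 'a measure) UNIV * exp ((norm w)\<^sup>2 / 2)"
proof -
  interpret finite_measure "std_gaussian :: 'a measure" by fact
  show "integrable std_gaussian (\<lambda>z. exp (w \<bullet> z))"
    using integrable_std_gaussian_translate_iff[of "\<lambda>_. 1" w] by simp
  have "measure (std_gaussian :: 'a measure) UNIV = exp (- (norm w)\<^sup>2 / 2) * (\<integral>z. exp (w \<bullet> z) \<partial>std_gaussian)"
    using integral_std_gaussian_translate[of "\<lambda>_. 1" w] by simp
  then show "(\<integral>z. exp (w \<bullet> z) \<partial>std_gaussian) = measure (std_gaussian :: 'a measure) UNIV * exp ((norm w)\<^sup>2 / 2)"
    by (simp add: exp_minus field_simps)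
qed

lemma std_gaussian_translate_sum_le:
  fixes g :: "'a::euclidean_space \<Rightarrow> real"
  assumes fin: "finite_measure (std_gaussian :: 'a measure)"
    and g [measurable]: "g \<in> borel_measurable lebesgue"
    and nonneg: "\<And>z. 0 \<le> g z" and bounded: "\<And>z. g z \<le> K"
  shows "exp ((norm w)\<^sup>2 / 2) * ((\<integral>z. g (z + w) \<partial>std_gaussian) + (\<integral>z. g (z - w) \<partial>std_gaussian))
           \<le> 2 * (\<integral>z. g z \<partial>std_gaussian)
             + 2 * K * measure (std_gaussian :: 'a measure) UNIV * (exp ((norm w)\<^sup>2 / 2) - 1)"
proof -
  interpret finite_measure "std_gaussian :: 'a measure" by fact
  have integrable_bounded: "integrable std_gaussian h"
    if "h \<in> borel_measurable lebesgue" "\<And>z. 0 \<le> h z" "\<And>z. h z \<le> K" for h :: "'a \<Rightarrow> real"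
    using that by (intro integrable_const_bound[of _ K]) auto
  have integrable_reweighted: "integrable std_gaussian (\<lambda>z. g z * exp (v \<bullet> z))" for v
    using integrable_bounded[of "\<lambda>z. g (z + v)"] nonneg bounded borel_measurable_affine[OF g, of 1 v]
    by (simp add: integrable_std_gaussian_translate_iff add.commute)
  define E where "E = exp ((norm w)\<^sup>2 / 2)"
  have translate: "E * (\<integral>z. g (z + v) \<partial>std_gaussian) = (\<integral>z. g z * exp (v \<bullet> z) \<partial>std_gaussian)"
    if "norm v = norm w" for v
    using that by (simp add: integral_std_gaussian_translate E_def flip: exp_add)
  have pointwise: "g z * exp (w \<bullet> z) + g z * exp (- w \<bullet> z)
      \<le> 2 * g z + (K * exp (w \<bullet> z) + K * exp (- w \<bullet> z) - 2 * K)" for z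
  proof -
    have "2 \<le> exp (w \<bullet> z) + exp (- w \<bullet> z)"
      using cosh_real_ge_1[of "w \<bullet> z"] by (simp add: cosh_def)
    then have "(g z - K) * (exp (w \<bullet> z) + exp (- w \<bullet> z) - 2) \<le> 0"
      using bounded[of z] by (intro mult_nonpos_nonneg) auto
    then show ?thesis
      by (simp add: algebra_simps)
  qed
  have "E * ((\<integral>z. g (z + w) \<partial>std_gaussian) + (\<integral>z. g (z - w) \<partial>std_gaussian))
      = (\<integral>z. g z * exp (w \<bullet> z) + g z * exp (- w \<bullet> z) \<partial>std_gaussian)"
    using translate[of w] translate[of "- w"] integrable_reweighted[of w] integrable_reweighted[of "- w"]
    by (simp add: distrib_left)
  also have "\<dots> \<le> (\<integral>z. 2 * g z + (K * exp (w \<bullet> z) + K * exp (- w \<bullet> z) - 2 * K) \<partial>std_gaussian)"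
    using integrable_reweighted[of w] integrable_reweighted[of "- w"] integrable_bounded[OF g nonneg bounded]
      integrable_std_gaussian_exp_inner[OF fin, of w]
      integrable_std_gaussian_exp_inner[OF fin, of "- w"] pointwise
    by (intro integral_mono) auto
  also have "\<dots> = 2 * (\<integral>z. g z \<partial>std_gaussian) + 2 * K * measure (std_gaussian :: 'a measure) UNIV * (E - 1)"
    using integrable_bounded[OF g nonneg bounded]
      integrable_std_gaussian_exp_inner[OF fin, of w]
      integrable_std_gaussian_exp_inner[OF fin, of "- w"]
      integral_std_gaussian_exp_inner[OF fin, of w]
      integral_std_gaussian_exp_inner[OF fin, of "- w"]
    by (simp add: E_def algebra_simps)
  finally show ?thesis
    unfolding E_def .
qed

lemma one_add_mult_exp_diff_le_exp_mult:
  fixes A x :: real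
  assumes "1 \<le> A" and "0 \<le> x"
  shows "1 + A * (exp x - 1) \<le> exp (A * x)"
proof -
  define \<phi> where "\<phi> y = exp (A * y) - A * exp y" for y
  have "\<phi> 0 \<le> \<phi> x"
  proof (rule DERIV_nonneg_imp_increasing_open[OF \<open>0 \<le> x\<close>])
    fix y :: real
    assume "0 < y" "y < x"
    have "DERIV \<phi> y :> A * exp (A * y) - A * exp y"
      unfolding \<phi>_def by (auto intro!: derivative_eq_intros)
    moreover have "exp y \<le> exp (A * y)"
      using \<open>1 \<le> A\<close> \<open>0 < y\<close> by simp
    then have "0 \<le> A * exp (A * y) - A * exp y"
      using \<open>1 \<le> A\<close> by (simp add: algebra_simps mult_left_mono)
    ultimately show "\<exists>d. DERIV \<phi> y :> d \<and> 0 \<le> d"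
      by blast
  next
    show "continuous_on {0..x} \<phi>"
      unfolding \<phi>_def by (intro continuous_intros)
  qed
  then show ?thesis
    unfolding \<phi>_def by (simp add: algebra_simps)
qed

lemma std_gaussian_translate_mul_le:
  fixes g :: "'a::euclidean_space \<Rightarrow> real"
  assumes fin: "finite_measure (std_gaussian :: 'a measure)"
    and mass: "0 < measure (std_gaussian :: 'a measure) UNIV"
    and g [measurable]: "g \<in> borel_measurable lebesgue"
    and pos: "\<And>z. 0 < g z" and oscillation: "\<And>p q. g p \<le> exp c * g q"
  shows "(\<integral>z. g (z + w) \<partial>std_gaussian) * (\<integral>z. g (z - w) \<partial>std_gaussian)
           \<le> (\<integral>z. g z \<partial>std_gaussian)\<^sup>2 * exp ((exp c - 1) * (norm w)\<^sup>2)"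
proof -
  interpret finite_measure "std_gaussian :: 'a measure" by fact
  define \<Gamma> where "\<Gamma> = measure (std_gaussian :: 'a measure) UNIV"
  define I where "I = (\<integral>z. g z \<partial>std_gaussian)"
  define E where "E = exp ((norm w)\<^sup>2 / 2)"
  define G_plus where "G_plus = (\<integral>z. g (z + w) \<partial>std_gaussian)"
  define G_minus where "G_minus = (\<integral>z. g (z - w) \<partial>std_gaussian)"
  have "1 \<le> exp c"
    using oscillation[of 0 0] pos[of 0] by (simp add: mult_le_cancel_right1)
  have "integrable std_gaussian g"
    using oscillation[of _ 0] pos by (intro integrable_const_bound[of _ "exp c * g 0"]) (auto simp: less_imp_le)
  have "g z * \<Gamma> \<le> exp c * I" for z
  proof -
    have "g z * \<Gamma> = (\<integral>y. g z \<partial>(std_gaussian :: 'a measure))"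
      by (simp add: \<Gamma>_def)
    also have "\<dots> \<le> (\<integral>y. exp c * g y \<partial>std_gaussian)"
      using \<open>integrable std_gaussian g\<close> oscillation by (intro Bochner_Integration.integral_mono) auto
    finally show ?thesis
      by (simp add: I_def)
  qed
  then have bounded: "g z \<le> exp c * I / \<Gamma>" for z
    using mass by (simp add: \<Gamma>_def pos_le_divide_eq)
  have "E * (G_plus + G_minus) \<le> 2 * I + 2 * (exp c * I / \<Gamma>) * \<Gamma> * (E - 1)"
    using std_gaussian_translate_sum_le[OF fin g less_imp_le[OF pos] bounded]
    unfolding E_def G_plus_def G_minus_def I_def \<Gamma>_def by blast
  also have "\<dots> = 2 * I * (1 + exp c * (E - 1))"
    using mass by (simp add: \<Gamma>_def field_simps)
  also have "\<dots> \<le> 2 * I * exp (exp c * ((norm w)\<^sup>2 / 2))"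
    unfolding E_def using \<open>1 \<le> exp c\<close> \<open>integrable std_gaussian g\<close> pos
    by (intro mult_left_mono one_add_mult_exp_diff_le_exp_mult integral_nonneg_AE)
      (auto simp: I_def less_imp_le)
  finally have "(G_plus + G_minus) / 2 \<le> I * exp (exp c * ((norm w)\<^sup>2 / 2)) / E"
    by (simp add: E_def field_simps)
  moreover have "0 \<le> G_plus" "0 \<le> G_minus"
    unfolding G_plus_def G_minus_def using pos by (auto intro!: integral_nonneg_AE simp: less_imp_le)
  ultimately have "((G_plus + G_minus) / 2)\<^sup>2 \<le> (I * exp (exp c * ((norm w)\<^sup>2 / 2)) / E)\<^sup>2"
    by (intro power_mono) auto
  moreover have "G_plus * G_minus \<le> ((G_plus + G_minus) / 2)\<^sup>2"
    using sum_squares_bound[of "G_plus" "G_minus"] by (simp add: power2_eq_square field_simps)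
  moreover have "(I * exp (exp c * ((norm w)\<^sup>2 / 2)) / E)\<^sup>2 = I\<^sup>2 * exp ((exp c - 1) * (norm w)\<^sup>2)"
    by (simp add: E_def power2_eq_square field_simps flip: exp_add exp_diff)
  ultimately show ?thesis
    unfolding G_plus_def G_minus_def I_def by linarith
qed

lemma std_gaussian_finite_of_integral:
  fixes g :: "'a::euclidean_space \<Rightarrow> real"
  assumes g [measurable]: "g \<in> borel_measurable lebesgue"
    and pos: "\<And>z. 0 < g z" and oscillation: "\<And>p q. g p \<le> exp c * g q"
    and nonzero: "(\<integral>z. g z \<partial>std_gaussian) \<noteq> 0"
  shows "finite_measure (std_gaussian :: 'a measure)"
    and "0 < measure (std_gaussian :: 'a measure) UNIV"
proof -
  have "integrable std_gaussian g"
    using nonzero not_integrable_integral_eq by blast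
  then have "integrable std_gaussian (\<lambda>z. exp c / g 0 * g z)"
    by simp
  then have "integrable (std_gaussian :: 'a measure) (\<lambda>_. 1 :: real)"
  proof (rule Bochner_Integration.integrable_bound)
    show "AE z in std_gaussian. norm (1 :: real) \<le> norm (exp c / g 0 * g z)"
      using oscillation[of 0] pos by (simp add: field_simps less_imp_le)
  qed simp
  then show "finite_measure (std_gaussian :: 'a measure)"
    by (intro finite_measureI) (auto simp: integrable_iff_bounded)
  then interpret finite_measure "std_gaussian :: 'a measure" .
  have "0 \<le> (\<integral>z. g z \<partial>std_gaussian)"
    using pos by (intro integral_nonneg_AE) (simp add: less_imp_le)
  then have "0 < (\<integral>z. g z \<partial>std_gaussian)"
    using nonzero by linarith
  also have "\<dots> \<le> (\<integral>z. exp c * g 0 \<partial>(std_gaussian :: 'a measure))"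
    using \<open>integrable std_gaussian g\<close> oscillation by (intro Bochner_Integration.integral_mono) auto
  also have "\<dots> = measure (std_gaussian :: 'a measure) UNIV * (exp c * g 0)"
    by simp
  finally show "0 < measure (std_gaussian :: 'a measure) UNIV"
    using pos[of 0] by (simp add: zero_less_mult_iff)
qed

lemma borel_measurable_OU_integrand:
  fixes f :: "'a::euclidean_space \<Rightarrow> real"
  assumes "0 < t" and "f \<in> borel_measurable lebesgue"
  shows "(\<lambda>z. f (exp (- t) *\<^sub>R x + sqrt (1 - exp (- 2 * t)) *\<^sub>R z)) \<in> borel_measurable lebesgue"
proof -
  have "exp (- 2 * t) < 1"
    using \<open>0 < t\<close> by simp
  then show ?thesis
    using borel_measurable_affine[OF assms(2), of "sqrt (1 - exp (- 2 * t))" "exp (- t) *\<^sub>R x"] by simp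
qed

lemma OU_ge:
  fixes f :: "'a::euclidean_space \<Rightarrow> real"
  assumes "finite_measure (std_gaussian :: 'a measure)" and "0 < t"
    and f [measurable]: "f \<in> borel_measurable lebesgue"
    and pos: "\<And>z. 0 < f z" and oscillation: "\<And>p q. f p \<le> exp c * f q"
  shows "exp (- c) * f p * measure (std_gaussian :: 'a measure) UNIV \<le> OU t f x"
proof -
  interpret finite_measure "std_gaussian :: 'a measure" by fact
  define g where "g z = f (exp (- t) *\<^sub>R x + sqrt (1 - exp (- 2 * t)) *\<^sub>R z)" for z
  have "g \<in> borel_measurable lebesgue"
    unfolding g_def[abs_def] by (rule borel_measurable_OU_integrand[OF \<open>0 < t\<close> f])
  then have "integrable std_gaussian g"
    using oscillation[of _ 0] pos
    by (intro integrable_const_bound[of _ "exp c * f 0"]) (auto simp: g_def less_imp_le)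
  have "exp (- c) * f p * measure (std_gaussian :: 'a measure) UNIV = (\<integral>z. exp (- c) * f p \<partial>(std_gaussian :: 'a measure))"
    by simp
  also have "\<dots> \<le> (\<integral>z. g z \<partial>std_gaussian)"
  proof (intro Bochner_Integration.integral_mono)
    show "exp (- c) * f p \<le> g z" for z
      using oscillation[of p] unfolding g_def by (simp add: exp_minus field_simps)
  qed (use \<open>integrable std_gaussian g\<close> in auto)
  finally show ?thesis
    by (simp add: OU_def g_def)
qed

lemma OU_mul_OU_le:
  fixes f :: "'a::euclidean_space \<Rightarrow> real"
  assumes fin: "finite_measure (std_gaussian :: 'a measure)"
    and mass: "0 < measure (std_gaussian :: 'a measure) UNIV" and "0 < t"
    and f [measurable]: "f \<in> borel_measurable lebesgue"
    and pos: "\<And>z. 0 < f z" and oscillation: "\<And>p q. f p \<le> exp c * f q"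
  shows "OU t f (x + h) * OU t f (x - h) \<le> (OU t f x)\<^sup>2 * exp (exp c / (exp (2 * t) - 1) * (norm h)\<^sup>2)"
proof -
  define a where "a = exp (- t)"
  define s where "s = sqrt (1 - exp (- 2 * t))"
  define g where "g z = f (a *\<^sub>R x + s *\<^sub>R z)" for z
  define w where "w = (a / s) *\<^sub>R h"
  have "exp (- 2 * t) < 1"
    using \<open>0 < t\<close> by simp
  then have "0 < s"
    by (simp add: s_def)
  have OU_translate: "OU t f (x + k) = (\<integral>z. g (z + (a / s) *\<^sub>R k) \<partial>std_gaussian)" for k
  proof -
    have "a *\<^sub>R (x + k) + s *\<^sub>R z = a *\<^sub>R x + s *\<^sub>R (z + (a / s) *\<^sub>R k)" for z
      using \<open>0 < s\<close> by (simp add: algebra_simps)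
    then show ?thesis
      by (simp add: OU_def g_def a_def s_def)
  qed
  have "(norm w)\<^sup>2 = (a / s)\<^sup>2 * (norm h)\<^sup>2"
    by (simp only: w_def norm_scaleR power_mult_distrib power2_abs)
  also have "(a / s)\<^sup>2 = 1 / (exp (2 * t) - 1)"
    using \<open>exp (- 2 * t) < 1\<close> \<open>0 < t\<close>
    by (simp add: a_def s_def power_divide power2_eq_square field_simps flip: exp_add)
  finally have norm_w: "(norm w)\<^sup>2 = (norm h)\<^sup>2 / (exp (2 * t) - 1)"
    by simp
  have "OU t f (x + h) * OU t f (x - h) = (\<integral>z. g (z + w) \<partial>std_gaussian) * (\<integral>z. g (z - w) \<partial>std_gaussian)"
    using OU_translate[of h] OU_translate[of "- h"] by (simp add: w_def)
  also have "\<dots> \<le> (\<integral>z. g z \<partial>std_gaussian)\<^sup>2 * exp ((exp c - 1) * (norm w)\<^sup>2)"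
    using borel_measurable_OU_integrand[OF \<open>0 < t\<close> f] pos oscillation
    by (intro std_gaussian_translate_mul_le[OF fin mass]) (auto simp: g_def a_def s_def)
  also have "\<dots> \<le> (OU t f x)\<^sup>2 * exp (exp c / (exp (2 * t) - 1) * (norm h)\<^sup>2)"
  proof -
    have "(exp c - 1) * (norm w)\<^sup>2 \<le> exp c * (norm w)\<^sup>2"
      by (simp add: algebra_simps)
    also have "\<dots> = exp c / (exp (2 * t) - 1) * (norm h)\<^sup>2"
      by (simp add: norm_w)
    finally have "exp ((exp c - 1) * (norm w)\<^sup>2) \<le> exp (exp c / (exp (2 * t) - 1) * (norm h)\<^sup>2)"
      by simp
    moreover have "OU t f x = (\<integral>z. g z \<partial>std_gaussian)"
      using OU_translate[of 0] by simp
    ultimately show ?thesis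
      by (simp add: mult_left_mono)
  qed
  finally show ?thesis .
qed

lemma neg_log_concave_of_midpoint_le:
  fixes F :: "'a::euclidean_space \<Rightarrow> real"
  assumes "0 \<le> lam" and "0 < m" and lower: "\<And>x. m \<le> F x"
    and mid: "\<And>x h. F (x + h) * F (x - h) \<le> (F x)\<^sup>2 * exp (lam * (norm h)\<^sup>2)"
  shows "neg_log_concave lam F"
proof -
  have pos: "0 < F x" for x
    using lower[of x] \<open>0 < m\<close> by simp
  define G where "G x = ln (F x) - lam * (norm x)\<^sup>2 / 2" for x
  have "G (x + h) + G (x - h) \<le> 2 * G x" for x h
  proof -
    have "ln (F (x + h)) + ln (F (x - h)) = ln (F (x + h) * F (x - h))"
      using pos[of "x + h"] pos[of "x - h"] by (simp add: ln_mult)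
    also have "\<dots> \<le> ln ((F x)\<^sup>2 * exp (lam * (norm h)\<^sup>2))"
      using mid[of x h] pos[of "x + h"] pos[of "x - h"] pos[of x]
      by (subst ln_le_cancel_iff) (auto intro: mult_pos_pos)
    also have "\<dots> = 2 * ln (F x) + lam * (norm h)\<^sup>2"
      using pos[of x] by (simp add: ln_mult ln_realpow)
    finally have "ln (F (x + h)) + ln (F (x - h)) \<le> 2 * ln (F x) + lam * (norm h)\<^sup>2" .
    moreover have "(norm (x + h))\<^sup>2 + (norm (x - h))\<^sup>2 = 2 * (norm x)\<^sup>2 + 2 * (norm h)\<^sup>2"
      unfolding power2_norm_eq_inner
      by (simp add: inner_add_left inner_add_right inner_diff_left inner_diff_right inner_commute)
    then have "lam * (norm (x + h))\<^sup>2 + lam * (norm (x - h))\<^sup>2 = 2 * (lam * (norm x)\<^sup>2) + 2 * (lam * (norm h)\<^sup>2)"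
      by (metis distrib_left mult.left_commute)
    ultimately show ?thesis
      unfolding G_def by (simp add: field_simps)
  qed
  moreover have "ln m - lam / 2 * (norm x)\<^sup>2 \<le> G x" for x
    using lower[of x] \<open>0 < m\<close> unfolding G_def by simp
  ultimately have "concave_on UNIV G"
    by (rule midpoint_concave_imp_concave_on) (use \<open>0 \<le> lam\<close> in simp)
  then show ?thesis
    unfolding neg_log_concave_def G_def using pos by simp
qed

theorem lemma9:
  fixes V :: "'a::euclidean_space \<Rightarrow> real" and c :: real
  assumes "V \<in> borel_measurable lebesgue"
    and "0 \<le> c"
    and "\<forall>x y. V x - V y \<le> c"
    and "(\<integral>x. exp (- V x) \<partial>std_gaussian) = 1"
  shows "\<forall>t>0. neg_log_concave (exp c / (exp (2 * t) - 1)) (OU t (\<lambda>x. exp (- V x)))"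
proof (intro allI impI)
  fix t :: real
  assume "0 < t"
  define f where "f x = exp (- V x)" for x
  have f [measurable]: "f \<in> borel_measurable lebesgue"
    using assms(1) unfolding f_def[abs_def] by measurable
  have pos: "0 < f x" for x
    by (simp add: f_def)
  have oscillation: "f p \<le> exp c * f q" for p q
    using assms(3)[rule_format, of q p] by (simp add: f_def flip: exp_add)
  have fin: "finite_measure (std_gaussian :: 'a measure)"
    and mass: "0 < measure (std_gaussian :: 'a measure) UNIV"
    using std_gaussian_finite_of_integral[OF f pos oscillation] assms(4) by (simp_all add: f_def)
  have "neg_log_concave (exp c / (exp (2 * t) - 1)) (OU t f)"
  proof (rule neg_log_concave_of_midpoint_le)
    show "exp (- c) * f 0 * measure (std_gaussian :: 'a measure) UNIV \<le> OU t f x" for x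
      by (rule OU_ge[OF fin \<open>0 < t\<close> f pos oscillation])
    show "OU t f (x + h) * OU t f (x - h) \<le> (OU t f x)\<^sup>2 * exp (exp c / (exp (2 * t) - 1) * (norm h)\<^sup>2)" for x h
      by (rule OU_mul_OU_le[OF fin mass \<open>0 < t\<close> f pos oscillation])
  qed (use \<open>0 < t\<close> mass pos in auto)
  then show "neg_log_concave (exp c / (exp (2 * t) - 1)) (OU t (\<lambda>x. exp (- V x)))"
    by (simp add: f_def[abs_def])
qed

end
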